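(* Let $\mathcal{Z}=\mathcal{X}\times\mathcal{Y}$ with a probability distribution, let $\mathcal{H}$ be a class of bounded real-valued functions $h:\mathcal{X}\times\mathcal{X}\to\mathbb{R}$, let $Y:\mathcal{Y}\times\mathcal{Y}\to\mathbb{R}$ be either $Y(y,y')=y-y'$ or $Y(y,y')=yy'$, with $Y:=\sup_{y,y'\in\mathcal{Y}}|Y(y,y')|<\infty$, and let $\phi:\mathbb{R}\to\mathbb{R}$ be $L$-Lipschitz. Define the loss $\ell(h,z,z')=\phi(h(x,x')Y(y,y'))$ for $z=(x,y),z'=(x',y')$. Then \[ \mathcal{R}_n(\ell\circ\mathcal{H})\le LY\,\mathcal{R}_n(\mathcal{H}). \]
   Context: $\ell\circ\mathcal{H}=\{(z,z')\mapsto\ell(h,z,z'):h\in\mathcal{H}\}$. For a class $\mathcal{G}$ of functions of pairs, $\mathcal{R}_n(\mathcal{G})=\mathbb{E}\left[\sup_{g\in\mathcal{G}}\frac1n\sum_{i=1}^n\epsilon_i g(z,z_i)\right]$, the expectation over i.i.d. Rademacher signs $\epsilon_i$ and i.i.d. $z,z_1,\dots,z_n$ from the distribution; for $\mathcal{H}$, $h(z,z_i)$ means $h(x,x_i)$. *)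

theory Defs
  imports "HOL-Analysis.Analysis" "HOL-Probability.Probability"
begin

definition sign_vectors :: "nat \<Rightarrow> (nat \<Rightarrow> real) set" where
  "sign_vectors n = PiE {..<n} (\<lambda>_. {-1, 1})"

definition cond_rademacher ::
    "nat \<Rightarrow> ('z \<Rightarrow> 'z \<Rightarrow> real) set \<Rightarrow> 'z \<Rightarrow> (nat \<Rightarrow> 'z) \<Rightarrow> ereal" where
  "cond_rademacher n G z zs =
     (\<Sum>\<sigma>\<in>sign_vectors n. (SUP g\<in>G. ereal ((1 / real n) * (\<Sum>i<n. \<sigma> i * g z (zs i)))))
       / ereal (real (card (sign_vectors n)))"

text \<open>The conditional average is always nonnegative for a
  nonempty class, so the expectation is taken as a nonnegative integral (values in [0,\<infinity>]).\<close>
definition rademacher ::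
    "nat \<Rightarrow> 'z measure \<Rightarrow> ('z \<Rightarrow> 'z \<Rightarrow> real) set \<Rightarrow> ennreal" where
  "rademacher n D G =
     (\<integral>\<^sup>+ p. e2ennreal (cond_rademacher n G (fst p) (snd p))
        \<partial>(D \<Otimes>\<^sub>M PiM {..<n} (\<lambda>_. D)))"

end

theory Submission imports Defs begin

text \<open>For a fixed point \<open>z\<close> and sample \<open>z\<^sub>1, \<dots>, z\<^sub>n\<close>, the \<open>i\<close>-th term of the loss class is
  \<open>\<phi>(t \<cdot> Y(y, y\<^sub>i))\<close> evaluated at \<open>t = h(x, x\<^sub>i)\<close>, an \<open>L\<cdot>Y\<close>-Lipschitz function of \<open>t\<close>. The
  Ledoux--Talagrand contraction principle therefore bounds the conditional Rademacher average
  of the loss class by \<open>L\<cdot>Y\<close> times that of \<open>H\<close>. It is proved by peeling off one sign at a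
  time: averaging over \<open>\<sigma>\<^sub>n = \<plusminus>1\<close> gives two suprema, which are compared pairwise using the
  Lipschitz bound. Integrating the pointwise inequality gives the theorem.\<close>

lemma card_sign_vectors: "card (sign_vectors n) = 2 ^ n"
  unfolding sign_vectors_def by (subst card_PiE) (auto simp: numeral_2_eq_2)

lemma sign_vectors_Suc:
  "sign_vectors (Suc n) = (\<lambda>(s, \<sigma>). \<sigma>(n := s)) ` ({-1, 1} \<times> sign_vectors n)"
  unfolding sign_vectors_def lessThan_Suc by (rule PiE_insert_eq)

lemma sum_sign_vectors_Suc:
  fixes f :: "(nat \<Rightarrow> real) \<Rightarrow> 'b::comm_monoid_add"
  shows "(\<Sum>\<sigma>\<in>sign_vectors (Suc n). f \<sigma>)
       = (\<Sum>\<sigma>\<in>sign_vectors n. f (\<sigma>(n := 1)) + f (\<sigma>(n := -1)))"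
proof -
  have inj: "inj_on (\<lambda>(s, \<sigma>). \<sigma>(n := s)) ({-1::real, 1} \<times> sign_vectors n)"
  proof (rule inj_onI, clarsimp)
    fix s \<sigma> s' \<sigma>'
    assume "\<sigma> \<in> sign_vectors n" "\<sigma>' \<in> sign_vectors n" and eq: "\<sigma>(n := s) = \<sigma>'(n := s')"
    then have "\<sigma> n = \<sigma>' n"
      unfolding sign_vectors_def by (auto simp: PiE_def extensional_def)
    with eq show "s = s' \<and> \<sigma> = \<sigma>'"
      by (metis fun_upd_same fun_upd_upd fun_upd_triv)
  qed
  have "(\<Sum>\<sigma>\<in>sign_vectors (Suc n). f \<sigma>)
      = (\<Sum>s\<in>{-1::real, 1}. \<Sum>\<sigma>\<in>sign_vectors n. f (\<sigma>(n := s)))"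
    unfolding sign_vectors_Suc sum.reindex[OF inj] sum.cartesian_product
    by (simp add: case_prod_unfold)
  also have "\<dots> = (\<Sum>\<sigma>\<in>sign_vectors n. f (\<sigma>(n := 1)) + f (\<sigma>(n := -1)))"
    by (simp add: sum.distrib add.commute)
  finally show ?thesis .
qed

lemma SUP_plus_SUP_minus_lipschitz_le:
  fixes a v :: "'a \<Rightarrow> real" and \<psi> :: "real \<Rightarrow> real"
  assumes T: "T \<noteq> {}" and lip: "\<And>x y. \<bar>\<psi> x - \<psi> y\<bar> \<le> c * \<bar>x - y\<bar>"
  shows "(SUP t\<in>T. ereal (a t + \<psi> (v t))) + (SUP t\<in>T. ereal (a t - \<psi> (v t)))
       \<le> (SUP t\<in>T. ereal (a t + c * v t)) + (SUP t\<in>T. ereal (a t - c * v t))"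
    (is "?Lp + ?Lm \<le> ?R")
proof -
  have pair: "ereal (a t + \<psi> (v t)) + ereal (a s - \<psi> (v s)) \<le> ?R" if "t \<in> T" "s \<in> T" for t s
  proof -
    have sum_le: "a t + \<psi> (v t) + (a s - \<psi> (v s)) \<le> a t + a s + c * \<bar>v t - v s\<bar>"
      using lip[of "v t" "v s"] by linarith
    consider "v s \<le> v t" | "v t \<le> v s" by linarith
    then show ?thesis
    proof cases
      case 1
      with sum_le have "ereal (a t + \<psi> (v t)) + ereal (a s - \<psi> (v s))
          \<le> ereal (a t + c * v t) + ereal (a s - c * v s)"
        by (simp add: right_diff_distrib)
      also have "\<dots> \<le> ?R" using that by (intro add_mono SUP_upper)
      finally show ?thesis .
    next
      case 2
      with sum_le have "ereal (a t + \<psi> (v t)) + ereal (a s - \<psi> (v s))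
          \<le> ereal (a s + c * v s) + ereal (a t - c * v t)"
        by (simp add: right_diff_distrib)
      also have "\<dots> \<le> ?R" using that by (intro add_mono SUP_upper)
      finally show ?thesis .
    qed
  qed
  obtain t\<^sub>0 where "t\<^sub>0 \<in> T" using T by auto
  then have "ereal (a t\<^sub>0 - \<psi> (v t\<^sub>0)) \<le> ?Lm" by (rule SUP_upper)
  then have L_minus: "?Lm \<noteq> -\<infinity>" by auto
  have "ereal (a t + \<psi> (v t)) + ?Lm \<le> ?R" if "t \<in> T" for t
  proof -
    have "ereal (a t + \<psi> (v t)) + ?Lm = (SUP s\<in>T. ereal (a t + \<psi> (v t)) + ereal (a s - \<psi> (v s)))"
      using T by (subst SUP_ereal_add_right) auto
    also have "\<dots> \<le> ?R" using pair that by (auto intro: SUP_least)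
    finally show ?thesis .
  qed
  then have "(SUP t\<in>T. ereal (a t + \<psi> (v t)) + ?Lm) \<le> ?R" by (rule SUP_least)
  then show ?thesis using T L_minus by (subst (asm) SUP_ereal_add_left) auto
qed

lemma sum_sign_vectors_SUP_contraction:
  fixes a :: "'a \<Rightarrow> real" and u :: "nat \<Rightarrow> 'a \<Rightarrow> real" and \<psi> :: "nat \<Rightarrow> real \<Rightarrow> real"
  assumes T: "T \<noteq> {}" and lip: "\<And>i x y. i < n \<Longrightarrow> \<bar>\<psi> i x - \<psi> i y\<bar> \<le> c * \<bar>x - y\<bar>"
  shows "(\<Sum>\<sigma>\<in>sign_vectors n. SUP t\<in>T. ereal (a t + (\<Sum>i<n. \<sigma> i * \<psi> i (u i t))))
       \<le> (\<Sum>\<sigma>\<in>sign_vectors n. SUP t\<in>T. ereal (a t + (\<Sum>i<n. \<sigma> i * (c * u i t))))"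
  using lip
proof (induction n arbitrary: a)
  case 0
  then show ?case by simp
next
  case (Suc n)
  let ?A = "\<lambda>\<sigma> t. a t + (\<Sum>i<n. \<sigma> i * \<psi> i (u i t))"
  have "(\<Sum>\<sigma>\<in>sign_vectors (Suc n). SUP t\<in>T. ereal (a t + (\<Sum>i<Suc n. \<sigma> i * \<psi> i (u i t))))
      = (\<Sum>\<sigma>\<in>sign_vectors n. (SUP t\<in>T. ereal (?A \<sigma> t + \<psi> n (u n t)))
                            + (SUP t\<in>T. ereal (?A \<sigma> t - \<psi> n (u n t))))"
    by (subst sum_sign_vectors_Suc) (simp add: algebra_simps)
  also have "\<dots> \<le> (\<Sum>\<sigma>\<in>sign_vectors n. (SUP t\<in>T. ereal (?A \<sigma> t + c * u n t))
                                     + (SUP t\<in>T. ereal (?A \<sigma> t - c * u n t)))"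
    by (intro sum_mono SUP_plus_SUP_minus_lipschitz_le[OF T] Suc.prems) simp
  also have "\<dots> = (\<Sum>\<sigma>\<in>sign_vectors n. SUP t\<in>T. ereal ((a t + c * u n t) + (\<Sum>i<n. \<sigma> i * \<psi> i (u i t))))
      + (\<Sum>\<sigma>\<in>sign_vectors n. SUP t\<in>T. ereal ((a t - c * u n t) + (\<Sum>i<n. \<sigma> i * \<psi> i (u i t))))"
    by (simp add: sum.distrib algebra_simps)
  also have "\<dots> \<le> (\<Sum>\<sigma>\<in>sign_vectors n. SUP t\<in>T. ereal ((a t + c * u n t) + (\<Sum>i<n. \<sigma> i * (c * u i t))))
      + (\<Sum>\<sigma>\<in>sign_vectors n. SUP t\<in>T. ereal ((a t - c * u n t) + (\<Sum>i<n. \<sigma> i * (c * u i t))))"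
    by (intro add_mono Suc.IH) (simp_all add: Suc.prems)
  also have "\<dots> = (\<Sum>\<sigma>\<in>sign_vectors (Suc n). SUP t\<in>T. ereal (a t + (\<Sum>i<Suc n. \<sigma> i * (c * u i t))))"
    by (subst sum_sign_vectors_Suc) (simp add: sum.distrib algebra_simps)
  finally show ?case .
qed

lemma sum_ereal_neq_MInfty:
  fixes f :: "'a \<Rightarrow> ereal"
  assumes "\<And>i. i \<in> A \<Longrightarrow> f i \<noteq> -\<infinity>"
  shows "sum f A \<noteq> -\<infinity>"
  using assms by (induction A rule: infinite_finite_induct) auto

lemma ereal_cmult_sum:
  fixes f :: "'a \<Rightarrow> ereal"
  assumes "0 \<le> c" and "\<And>i. i \<in> A \<Longrightarrow> f i \<noteq> -\<infinity>"
  shows "ereal c * sum f A = (\<Sum>i\<in>A. ereal c * f i)"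
  using assms(2)
proof (induction A rule: infinite_finite_induct)
  case (insert x F)
  then have "sum f F \<noteq> -\<infinity>" by (intro sum_ereal_neq_MInfty) auto
  then have "ereal c * (f x + sum f F) = ereal c * f x + ereal c * sum f F"
    using insert.prems assms(1) by (cases "f x"; cases "sum f F") (auto simp: distrib_left)
  with insert show ?case by simp
qed simp_all

lemma e2ennreal_ereal_mult:
  assumes "0 \<le> c"
  shows "e2ennreal (ereal c * x) = ennreal c * e2ennreal x"
proof (cases "x \<le> 0")
  case True
  with assms have "ereal c * x \<le> 0" by (simp add: ereal_mult_le_0_iff)
  with True show ?thesis by (simp add: e2ennreal_neg)
next
  case False
  with assms show ?thesis by (cases x) (auto simp: ennreal_mult' ennreal_top_mult)
qed

lemma nn_integral_cmult_le:
  fixes c :: real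
  assumes "0 \<le> c"
  shows "(\<integral>\<^sup>+x. ennreal c * f x \<partial>M) \<le> ennreal c * integral\<^sup>N M f"
proof (cases "c = 0")
  case False
  with assms have c: "0 < c" by simp
  text \<open>No measurability is assumed, so work with the simple functions below \<open>c \<cdot> f\<close>
    directly: dividing one of them by \<open>c\<close> gives a simple function below \<open>f\<close>.\<close>
  show ?thesis
    unfolding nn_integral_def
  proof (rule SUP_least)
    fix s assume s: "s \<in> {s. simple_function M s \<and> s \<le> (\<lambda>x. ennreal c * f x)}"
    define s' where "s' = (\<lambda>x. ennreal (1 / c) * s x)"
    have s_eq: "s = (\<lambda>x. ennreal c * s' x)"
      unfolding s'_def using c by (simp add: mult.assoc[symmetric] ennreal_mult[symmetric])
    have simple: "simple_function M s'" unfolding s'_def using s by auto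
    have "s' \<le> f"
    proof (rule le_funI)
      fix x
      have "ennreal c * s' x \<le> ennreal c * f x" using s s_eq by (auto simp: le_fun_def dest: fun_cong)
      then show "s' x \<le> f x" using c by (simp add: ennreal_mult_le_mult_iff)
    qed
    have "integral\<^sup>S M s = ennreal c * integral\<^sup>S M s'"
      by (subst s_eq) (simp add: simple)
    also have "\<dots> \<le> ennreal c * (SUP s\<in>{s. simple_function M s \<and> s \<le> f}. integral\<^sup>S M s)"
      using simple \<open>s' \<le> f\<close> by (intro mult_left_mono SUP_upper) auto
    finally show "integral\<^sup>S M s \<le> ennreal c * (SUP s\<in>{s. simple_function M s \<and> s \<le> f}. integral\<^sup>S M s)" .
  qed
qed simp

lemma cond_rademacher_lipschitz_contraction:
  fixes f g :: "'a \<Rightarrow> 'z \<Rightarrow> 'z \<Rightarrow> real" and \<psi> :: "nat \<Rightarrow> real \<Rightarrow> real"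
  assumes C: "0 \<le> C"
    and lip: "\<And>i x y. i < n \<Longrightarrow> \<bar>\<psi> i x - \<psi> i y\<bar> \<le> C * \<bar>x - y\<bar>"
    and comp: "\<And>h i. h \<in> H \<Longrightarrow> i < n \<Longrightarrow> f h z (zs i) = \<psi> i (g h z (zs i))"
  shows "cond_rademacher n (f ` H) z zs \<le> ereal C * cond_rademacher n (g ` H) z zs"
proof -
  let ?avg = "\<lambda>\<sigma> h. ereal ((1 / real n) * (\<Sum>i<n. \<sigma> i * g h z (zs i)))"
  have sums_le: "(\<Sum>\<sigma>\<in>sign_vectors n. SUP h\<in>H. ereal ((1 / real n) * (\<Sum>i<n. \<sigma> i * f h z (zs i))))
      \<le> ereal C * (\<Sum>\<sigma>\<in>sign_vectors n. SUP h\<in>H. ?avg \<sigma> h)"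
  proof (cases "H = {}")
    case True
    \<comment> \<open>both suprema are over the empty set, hence \<open>-\<infinity>\<close>\<close>
    have "(\<Sum>\<sigma>\<in>sign_vectors n. -\<infinity>::ereal) = -\<infinity>"
      by (induction n) (simp_all add: sum_sign_vectors_Suc, simp add: sign_vectors_def)
    with True show ?thesis by (simp add: bot_ereal_def)
  next
    case False
    have lip_avg: "\<bar>\<psi> i x / real n - \<psi> i y / real n\<bar> \<le> C / real n * \<bar>x - y\<bar>" if "i < n" for i x y
      using divide_right_mono[OF lip[OF that, of x y], of "real n"]
      by (simp add: diff_divide_distrib[symmetric] abs_divide)
    have "(\<Sum>\<sigma>\<in>sign_vectors n. SUP h\<in>H. ereal ((1 / real n) * (\<Sum>i<n. \<sigma> i * f h z (zs i))))
        = (\<Sum>\<sigma>\<in>sign_vectors n. SUP h\<in>H. ereal (0 + (\<Sum>i<n. \<sigma> i * (\<psi> i (g h z (zs i)) / real n))))"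
      using comp by (intro sum.cong SUP_cong refl) (simp add: sum_distrib_left)
    also have "\<dots> \<le> (\<Sum>\<sigma>\<in>sign_vectors n. SUP h\<in>H. ereal (0 + (\<Sum>i<n. \<sigma> i * (C / real n * g h z (zs i)))))"
      by (rule sum_sign_vectors_SUP_contraction[OF False lip_avg])
    also have "\<dots> \<le> (\<Sum>\<sigma>\<in>sign_vectors n. ereal C * (SUP h\<in>H. ?avg \<sigma> h))"
    proof (intro sum_mono SUP_least)
      fix \<sigma> h assume "h \<in> H"
      then have "ereal C * ?avg \<sigma> h \<le> ereal C * (SUP h\<in>H. ?avg \<sigma> h)"
        using C by (intro ereal_mult_left_mono SUP_upper) auto
      then show "ereal (0 + (\<Sum>i<n. \<sigma> i * (C / real n * g h z (zs i)))) \<le> ereal C * (SUP h\<in>H. ?avg \<sigma> h)"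
        by (simp add: sum_distrib_left algebra_simps)
    qed
    also have "\<dots> = ereal C * (\<Sum>\<sigma>\<in>sign_vectors n. SUP h\<in>H. ?avg \<sigma> h)"
    proof (rule ereal_cmult_sum[OF C, symmetric])
      fix \<sigma>
      from False obtain h where "h \<in> H" by blast
      then have "?avg \<sigma> h \<le> (SUP h\<in>H. ?avg \<sigma> h)" by (rule SUP_upper)
      then show "(SUP h\<in>H. ?avg \<sigma> h) \<noteq> -\<infinity>" by auto
    qed
    finally show ?thesis .
  qed
  have "0 < ereal (real (card (sign_vectors n)))" by (simp add: card_sign_vectors)
  from ereal_divide_right_mono[OF sums_le this] show ?thesis
    by (simp add: cond_rademacher_def image_comp ereal_times_divide_eq)
qed

lemma lipschitz_on_UNIV_mult_right_le:
  fixes \<phi> :: "real \<Rightarrow> real"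
  assumes "L-lipschitz_on UNIV \<phi>" and "\<bar>c\<bar> \<le> S"
  shows "\<bar>\<phi> (x * c) - \<phi> (y * c)\<bar> \<le> L * S * \<bar>x - y\<bar>"
proof -
  have "\<bar>\<phi> (x * c) - \<phi> (y * c)\<bar> \<le> L * (\<bar>x - y\<bar> * \<bar>c\<bar>)"
    using lipschitz_onD[OF assms(1), of "x * c" "y * c"]
    by (simp add: dist_real_def abs_mult left_diff_distrib[symmetric])
  also have "\<dots> \<le> L * (\<bar>x - y\<bar> * S)"
    using assms lipschitz_on_nonneg by (intro mult_left_mono mult_right_mono) auto
  finally show ?thesis by (simp add: mult_ac)
qed

theorem theorem7:
  fixes D :: "('x \<times> real) measure"
    and X :: "'x set" and Ys :: "real set"
    and H :: "('x \<Rightarrow> 'x \<Rightarrow> real) set"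
    and Yf :: "real \<Rightarrow> real \<Rightarrow> real"
    and \<phi> :: "real \<Rightarrow> real" and L :: real and n :: nat
  assumes "prob_space D"
    and "space D = X \<times> Ys"
    and "\<forall>h\<in>H. \<exists>M. \<forall>x\<in>X. \<forall>x'\<in>X. \<bar>h x x'\<bar> \<le> M"
    and "Yf = (\<lambda>y y'. y - y') \<or> Yf = (\<lambda>y y'. y * y')"
    and "bdd_above ((\<lambda>(y, y'). \<bar>Yf y y'\<bar>) ` (Ys \<times> Ys))"
    and "L-lipschitz_on UNIV \<phi>"
  shows "rademacher n D ((\<lambda>h z z'. \<phi> (h (fst z) (fst z') * Yf (snd z) (snd z'))) ` H)
           \<le> ennreal (L * (SUP (y, y')\<in>Ys \<times> Ys. \<bar>Yf y y'\<bar>))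
             * rademacher n D ((\<lambda>h z z'. h (fst z) (fst z')) ` H)"
proof -
  let ?F = "(\<lambda>h z z'. \<phi> (h (fst z) (fst z') * Yf (snd z) (snd z'))) ` H"
  let ?G = "(\<lambda>h z z'. h (fst z) (fst z')) ` H"
  define S where "S = (SUP (y, y')\<in>Ys \<times> Ys. \<bar>Yf y y'\<bar>)"
  have Yf_le: "\<bar>Yf y y'\<bar> \<le> S" if "y \<in> Ys" "y' \<in> Ys" for y y'
    using cSUP_upper[OF _ assms(5), of "(y, y')"] that by (simp add: S_def)
  obtain y where "y \<in> Ys" using prob_space.not_empty[OF assms(1)] assms(2) by auto
  with Yf_le[of y y] have "0 \<le> S" by linarith
  with lipschitz_on_nonneg[OF assms(6)] have C: "0 \<le> L * S" by simp
  have pointwise: "cond_rademacher n ?F z zs \<le> ereal (L * S) * cond_rademacher n ?G z zs"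
    if "z \<in> space D" "\<And>i. i < n \<Longrightarrow> zs i \<in> space D" for z zs
  proof (rule cond_rademacher_lipschitz_contraction[OF C])
    fix i x y assume "i < n"
    with that assms(2) have "z \<in> X \<times> Ys" "zs i \<in> X \<times> Ys" by auto
    then have "\<bar>Yf (snd z) (snd (zs i))\<bar> \<le> S" by (intro Yf_le) (auto simp: mem_Times_iff)
    then show "\<bar>\<phi> (x * Yf (snd z) (snd (zs i))) - \<phi> (y * Yf (snd z) (snd (zs i)))\<bar> \<le> L * S * \<bar>x - y\<bar>"
      by (rule lipschitz_on_UNIV_mult_right_le[OF assms(6)])
  qed simp
  show ?thesis
    unfolding rademacher_def S_def[symmetric]
  proof (rule order_trans[OF nn_integral_mono nn_integral_cmult_le[OF C]])
    fix p assume "p \<in> space (D \<Otimes>\<^sub>M PiM {..<n} (\<lambda>_. D))"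
    then have "fst p \<in> space D" "\<And>i. i < n \<Longrightarrow> snd p i \<in> space D"
      by (auto simp: space_pair_measure space_PiM PiE_def Pi_def)
    from e2ennreal_mono[OF pointwise[OF this]] show "e2ennreal (cond_rademacher n ?F (fst p) (snd p))
        \<le> ennreal (L * S) * e2ennreal (cond_rademacher n ?G (fst p) (snd p))"
      by (simp add: e2ennreal_ereal_mult[OF C])
  qed
qed

end
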